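(* For every integer $K\ge2$: $\eta(r,K,1)<1-\frac1K$ for all $r>1$, and $\lim_{r\to\infty}\eta(r,K,1)=1-\frac1K$. For every $r>1$: $\eta(r,K,1)\le\frac{\ln r}{1+\ln r}$ for all integers $K\ge 2$, and $\lim_{K\to\infty}\eta(r,K,1)=\frac{\ln r}{1+\ln r}$.
   Context: Single item auction with one buyer whose value takes values $0<x^1<\dots<x^K$ with probabilities $p^i>0$, $\sum_ip^i=1$. Let $t(x,p)=\max\{i: i\in\arg\max_{1\le k\le K}x^k\sum_{j=k}^Kp^j\}$. The efficiency loss ratio of the revenue-optimal auction is $\mathrm{ELR}_1(x,p)=\sum_{i=1}^{t(x,p)-1}p^ix^i/\sum_{i=1}^Kp^ix^i$. $\eta(r,K,1)$ is the supremum of $\mathrm{ELR}_1(x,p)$ over all such $p$ and all $x$ with $0<x^1<\dots<x^K\le rx^1$. *)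

theory Defs
  imports "HOL-Analysis.Analysis"
begin

text \<open>Values x 1 < ... < x K and probabilities p 1, ..., p K are functions on nat,
  only the indices 1..K are meaningful.\<close>

definition rev_at :: "nat \<Rightarrow> (nat \<Rightarrow> real) \<Rightarrow> (nat \<Rightarrow> real) \<Rightarrow> nat \<Rightarrow> real" where
  "rev_at K x p k = x k * (\<Sum>j=k..K. p j)"

definition t_idx :: "nat \<Rightarrow> (nat \<Rightarrow> real) \<Rightarrow> (nat \<Rightarrow> real) \<Rightarrow> nat" where
  "t_idx K x p = Max {i \<in> {1..K}. \<forall>k\<in>{1..K}. rev_at K x p k \<le> rev_at K x p i}"

definition ELR1 :: "nat \<Rightarrow> (nat \<Rightarrow> real) \<Rightarrow> (nat \<Rightarrow> real) \<Rightarrow> real" where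
  "ELR1 K x p = (\<Sum>i=1..t_idx K x p - 1. p i * x i) / (\<Sum>i=1..K. p i * x i)"

definition admissible :: "real \<Rightarrow> nat \<Rightarrow> (nat \<Rightarrow> real) \<Rightarrow> (nat \<Rightarrow> real) \<Rightarrow> bool" where
  "admissible r K x p \<longleftrightarrow>
     0 < x 1 \<and> (\<forall>i\<in>{1..K}. \<forall>j\<in>{1..K}. i < j \<longrightarrow> x i < x j) \<and> x K \<le> r * x 1 \<and>
     (\<forall>i\<in>{1..K}. 0 < p i) \<and> (\<Sum>i=1..K. p i) = 1"

definition eta :: "real \<Rightarrow> nat \<Rightarrow> real" where
  "eta r K = Sup {ELR1 K x p | x p. admissible r K x p}"

end

theory Submission
  imports Defs "HOL-Real_Asymp.Real_Asymp"
begin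

text \<open>Let \<open>S k\<close> be the probability that the value is at least \<open>x k\<close> and \<open>R = x t * S t\<close>
  the optimal revenue. Every excluded value \<open>x i\<close> (\<open>i < t\<close>) satisfies \<open>x i * S i \<le> R\<close>,
  so the lost welfare is at most \<open>c * R\<close> with \<open>c = \<Sum>i<t. p i / S i\<close>, while the retained
  welfare is at least \<open>R\<close>; hence \<open>ELR \<le> c / (1 + c)\<close>. Since \<open>R \<ge> x 1\<close> and \<open>x t \<le> r * x 1\<close>,
  \<open>S t \<ge> 1 / r\<close>, which bounds the hazard sum \<open>c\<close> both by \<open>ln (S 1 / S t) \<le> ln r\<close> and by
  \<open>(K - 1) * (1 - 1 / r)\<close>. Both bounds are asymptotically attained by the equal-revenue
  distribution with ratio \<open>r powr (1 / (K - 1))\<close> between consecutive values.\<close>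

definition survival :: "nat \<Rightarrow> (nat \<Rightarrow> real) \<Rightarrow> nat \<Rightarrow> real" where
  "survival K p k = (\<Sum>j=k..K. p j)"

lemma rev_at_survival: "rev_at K x p k = x k * survival K p k"
  by (simp add: rev_at_def survival_def)

lemma survival_Suc: "k \<le> K \<Longrightarrow> survival K p k = p k + survival K p (Suc k)"
  by (simp add: survival_def sum.atLeast_Suc_atMost)

lemma divide_one_plus_strict_mono:
  fixes a b :: real
  assumes "0 \<le> a" "a < b"
  shows "a / (1 + a) < b / (1 + b)"
  using assms by (simp add: divide_simps algebra_simps)

lemma tendsto_divide_one_plus:
  fixes f :: "'a \<Rightarrow> real"
  assumes "(f \<longlongrightarrow> c) F" "0 \<le> c"
  shows "((\<lambda>x. f x / (1 + f x)) \<longlongrightarrow> c / (1 + c)) F"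
  using assms by (intro tendsto_intros) auto

lemma divide_le_divide_one_plus:
  fixes L R W c :: real
  assumes "0 \<le> L" "0 < R" "L + R \<le> W" "L \<le> c * R"
  shows "L / W \<le> c / (1 + c)"
proof -
  have "0 \<le> c * R" using assms by linarith
  with \<open>0 < R\<close> have "0 \<le> c" by (simp add: zero_le_mult_iff)
  have "L * (1 + c) = L + c * L" by (simp add: algebra_simps)
  also have "\<dots> \<le> c * (L + R)" using assms by (simp add: algebra_simps)
  also have "\<dots> \<le> c * W" using assms \<open>0 \<le> c\<close> by (intro mult_left_mono) auto
  finally show ?thesis using assms \<open>0 \<le> c\<close> by (simp add: divide_simps)
qed

lemma sum_hazard_le_ln:
  fixes S :: "nat \<Rightarrow> real"
  assumes "a \<le> b" and pos: "\<And>i. a \<le> i \<Longrightarrow> i \<le> b \<Longrightarrow> 0 < S i"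
  shows "(\<Sum>i=a..<b. (S i - S (Suc i)) / S i) \<le> ln (S a) - ln (S b)"
proof -
  have "(\<Sum>i=a..<b. (S i - S (Suc i)) / S i) \<le> (\<Sum>i=a..<b. ln (S i) - ln (S (Suc i)))"
  proof (rule sum_mono)
    fix i assume "i \<in> {a..<b}"
    then have "0 < S i" "0 < S (Suc i)" using pos by auto
    then have "ln (S (Suc i) / S i) \<le> S (Suc i) / S i - 1" by (intro ln_le_minus_one) auto
    with \<open>0 < S i\<close> \<open>0 < S (Suc i)\<close> show "(S i - S (Suc i)) / S i \<le> ln (S i) - ln (S (Suc i))"
      by (simp add: ln_div diff_divide_distrib)
  qed
  also have "\<dots> = ln (S a) - ln (S b)"
    using sum_Suc_diff'[OF \<open>a \<le> b\<close>, of "\<lambda>i. - ln (S i)"] by simp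
  finally show ?thesis .
qed

lemma sum_hazard_le_card:
  fixes S :: "nat \<Rightarrow> real"
  assumes "0 < S b" and anti: "\<And>i j. a \<le> i \<Longrightarrow> i \<le> j \<Longrightarrow> j \<le> b \<Longrightarrow> S j \<le> S i"
  shows "(\<Sum>i=a..<b. (S i - S (Suc i)) / S i) \<le> real (b - a) * (1 - S b / S a)"
proof -
  have "(\<Sum>i=a..<b. (S i - S (Suc i)) / S i) \<le> (\<Sum>i=a..<b. 1 - S b / S a)"
  proof (rule sum_mono)
    fix i assume "i \<in> {a..<b}"
    then have "S b \<le> S (Suc i)" "S i \<le> S a" "0 < S i" using anti[of i b] anti[of "Suc i" b] anti[of a i] \<open>0 < S b\<close> by auto
    with \<open>0 < S b\<close> have "S b / S a \<le> S (Suc i) / S i" by (intro frac_le) auto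
    with \<open>0 < S i\<close> show "(S i - S (Suc i)) / S i \<le> 1 - S b / S a" by (simp add: diff_divide_distrib)
  qed
  then show ?thesis by simp
qed

lemma t_idx_argmax:
  assumes "1 \<le> K"
  shows "t_idx K x p \<in> {i \<in> {1..K}. \<forall>k\<in>{1..K}. rev_at K x p k \<le> rev_at K x p i}"
proof -
  have "Max (rev_at K x p ` {1..K}) \<in> rev_at K x p ` {1..K}"
    using assms by (intro Max_in) auto
  then obtain i where "i \<in> {1..K}" "rev_at K x p i = Max (rev_at K x p ` {1..K})"
    by auto
  then have "\<forall>k\<in>{1..K}. rev_at K x p k \<le> rev_at K x p i"
    by simp
  with \<open>i \<in> {1..K}\<close> show ?thesis
    unfolding t_idx_def by (intro Max_in) auto
qed

context
  fixes r :: real and K :: nat and x p :: "nat \<Rightarrow> real"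
  assumes adm: "admissible r K x p" and K: "1 \<le> K"
begin

lemma admissible_x_mono:
  assumes "1 \<le> i" "i \<le> j" "j \<le> K"
  shows "x i \<le> x j"
proof (cases "i = j")
  case False
  with assms adm have "x i < x j" unfolding admissible_def by force
  then show ?thesis by simp
qed simp

lemma admissible_x_pos: "1 \<le> i \<Longrightarrow> i \<le> K \<Longrightarrow> 0 < x i"
  using admissible_x_mono[of 1 i] adm unfolding admissible_def by auto

lemma admissible_p_pos: "1 \<le> i \<Longrightarrow> i \<le> K \<Longrightarrow> 0 < p i"
  using adm unfolding admissible_def by auto

lemma admissible_survival_one: "survival K p 1 = 1"
  using adm unfolding admissible_def survival_def by auto

lemma admissible_survival_pos: "1 \<le> k \<Longrightarrow> k \<le> K \<Longrightarrow> 0 < survival K p k"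
  unfolding survival_def using admissible_p_pos by (intro sum_pos) auto

lemma admissible_survival_antimono: "1 \<le> i \<Longrightarrow> i \<le> j \<Longrightarrow> survival K p j \<le> survival K p i"
  unfolding survival_def using admissible_p_pos by (intro sum_mono2) (auto intro: less_imp_le)

lemma t_idx_range: "1 \<le> t_idx K x p" "t_idx K x p \<le> K"
  using t_idx_argmax[OF K, of x p] by auto

lemma x_survival_le_t_idx:
  "k \<in> {1..K} \<Longrightarrow> x k * survival K p k \<le> x (t_idx K x p) * survival K p (t_idx K x p)"
  using t_idx_argmax[OF K, of x p] by (auto simp: rev_at_survival)

lemma admissible_r_ge_one: "1 \<le> r"
proof -
  have "x 1 \<le> x K" "x K \<le> r * x 1" "0 < x 1"
    using admissible_x_mono[of 1 K] adm K unfolding admissible_def by auto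
  then show ?thesis by (metis mult_le_cancel_right1 order.trans)
qed

text \<open>The optimal price earns at least what price \<open>x 1\<close> earns, namely \<open>x 1\<close>, while it is
  at most \<open>r * x 1\<close>: so the item still sells with probability at least \<open>1 / r\<close>.\<close>
lemma survival_t_idx_ge: "1 / r \<le> survival K p (t_idx K x p)"
proof -
  let ?t = "t_idx K x p"
  have "x 1 \<le> x ?t * survival K p ?t"
    using x_survival_le_t_idx[of 1] K admissible_survival_one by auto
  also have "\<dots> \<le> r * x 1 * survival K p ?t"
    using adm t_idx_range admissible_x_mono[of ?t K] admissible_survival_pos[of ?t]
    unfolding admissible_def by (intro mult_right_mono) auto
  finally have "1 \<le> r * survival K p ?t"
    using admissible_x_pos[of 1] K by (simp add: mult.commute mult.left_commute)
  then show ?thesis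
    using admissible_r_ge_one by (simp add: divide_simps mult.commute)
qed

text \<open>Each excluded value \<open>x i\<close>, posted as a price, earns at most the optimal revenue \<open>R\<close>,
  so \<open>p i * x i \<le> R * p i / survival K p i\<close>; the welfare retained is at least \<open>R\<close>.\<close>
lemma ELR1_le_of_sum_hazard_le:
  assumes "(\<Sum>i=1..<t_idx K x p. p i / survival K p i) \<le> c"
  shows "ELR1 K x p \<le> c / (1 + c)"
proof -
  define t S where "t = t_idx K x p" and "S = survival K p"
  have t: "1 \<le> t" "t \<le> K"
    unfolding t_def using t_idx_range by auto
  define R L W where "R = x t * S t" and "L = (\<Sum>i=1..<t. p i * x i)"
    and "W = (\<Sum>i=1..K. p i * x i)"
  have "0 < R"
    unfolding R_def S_def using t admissible_x_pos admissible_survival_pos by auto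
  have "0 \<le> L"
    unfolding L_def using t admissible_x_pos admissible_p_pos
    by (intro sum_nonneg) (auto intro!: mult_nonneg_nonneg less_imp_le)
  have "R = (\<Sum>i=t..K. p i * x t)"
    unfolding R_def S_def survival_def by (simp add: sum_distrib_left mult_ac)
  also have "\<dots> \<le> (\<Sum>i=t..K. p i * x i)"
    using t admissible_p_pos admissible_x_mono by (intro sum_mono mult_left_mono) (auto intro: less_imp_le)
  also have "L + \<dots> = (\<Sum>i\<in>{1..<t} \<union> {t..K}. p i * x i)"
    unfolding L_def by (rule sum.union_disjoint[symmetric]) auto
  also have "\<dots> = W"
    unfolding W_def using t by (intro sum.cong) auto
  finally have "L + R \<le> W" by simp
  have "L \<le> (\<Sum>i=1..<t. p i / S i * R)"
    unfolding L_def
  proof (rule sum_mono)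
    fix i assume "i \<in> {1..<t}"
    then have i: "1 \<le> i" "i \<le> K" using t by auto
    have "p i / S i * (x i * S i) \<le> p i / S i * R"
      using x_survival_le_t_idx[of i] i admissible_p_pos[OF i] admissible_survival_pos[OF i]
      unfolding R_def S_def t_def by (intro mult_left_mono) auto
    then show "p i * x i \<le> p i / S i * R"
      using admissible_survival_pos[OF i] by (simp add: S_def field_simps)
  qed
  also have "\<dots> \<le> c * R"
    using assms \<open>0 < R\<close> unfolding S_def t_def sum_distrib_right[symmetric]
    by (intro mult_right_mono) auto
  finally have "L \<le> c * R" .
  have "{1..t - 1} = {1..<t}" using t by auto
  then have "ELR1 K x p = L / W"
    unfolding ELR1_def L_def W_def t_def by simp
  also have "\<dots> \<le> c / (1 + c)"
    using \<open>0 \<le> L\<close> \<open>0 < R\<close> \<open>L + R \<le> W\<close> \<open>L \<le> c * R\<close> by (rule divide_le_divide_one_plus)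
  finally show ?thesis .
qed

lemma sum_hazard_survival:
  "(\<Sum>i=1..<t_idx K x p. p i / survival K p i)
     = (\<Sum>i=1..<t_idx K x p. (survival K p i - survival K p (Suc i)) / survival K p i)"
  using t_idx_range by (intro sum.cong) (auto simp: survival_Suc)

lemma ELR1_le_ln: "ELR1 K x p \<le> ln r / (1 + ln r)"
proof (rule ELR1_le_of_sum_hazard_le)
  let ?t = "t_idx K x p" and ?S = "survival K p"
  have "(\<Sum>i=1..<?t. p i / ?S i) \<le> ln (?S 1) - ln (?S ?t)"
    unfolding sum_hazard_survival using t_idx_range admissible_survival_pos
    by (intro sum_hazard_le_ln) auto
  also have "\<dots> \<le> ln r"
  proof -
    have "1 \<le> r * ?S ?t"
      using survival_t_idx_ge admissible_r_ge_one by (simp add: field_simps)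
    then have "0 \<le> ln (r * ?S ?t)" by (rule ln_ge_zero)
    then show ?thesis
      using admissible_r_ge_one admissible_survival_pos[OF t_idx_range] admissible_survival_one
      by (simp add: ln_mult)
  qed
  finally show "(\<Sum>i=1..<?t. p i / ?S i) \<le> ln r" .
qed

lemma ELR1_le_linear:
  "ELR1 K x p \<le> (real K - 1) * (1 - 1 / r) / (1 + (real K - 1) * (1 - 1 / r))"
proof (rule ELR1_le_of_sum_hazard_le)
  let ?t = "t_idx K x p" and ?S = "survival K p"
  have "(\<Sum>i=1..<?t. p i / ?S i) \<le> real (?t - 1) * (1 - ?S ?t / ?S 1)"
    unfolding sum_hazard_survival using t_idx_range
    by (intro sum_hazard_le_card admissible_survival_pos admissible_survival_antimono) auto
  also have "\<dots> \<le> (real K - 1) * (1 - 1 / r)"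
    using survival_t_idx_ge admissible_survival_one admissible_survival_antimono[of 1 ?t]
      t_idx_range admissible_r_ge_one
    by (intro mult_mono) (auto simp: of_nat_diff)
  finally show "(\<Sum>i=1..<?t. p i / ?S i) \<le> (real K - 1) * (1 - 1 / r)" .
qed

end

lemma ELR1_le_eta:
  assumes "admissible r K x p" "1 \<le> K"
  shows "ELR1 K x p \<le> eta r K"
proof -
  have "bdd_above {ELR1 K x p | x p. admissible r K x p}"
    using ELR1_le_ln[OF _ \<open>1 \<le> K\<close>] unfolding bdd_above_def by blast
  then show ?thesis
    unfolding eta_def using assms by (intro cSup_upper) auto
qed

lemma eta_le:
  assumes "\<exists>x p. admissible r K x p" "\<And>x p. admissible r K x p \<Longrightarrow> ELR1 K x p \<le> B"
  shows "eta r K \<le> B"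
  unfolding eta_def using assms by (intro cSup_least) auto

text \<open>The equal-revenue distribution: every price \<open>x k\<close> earns revenue \<open>1\<close>, so the seller's
  tie-breaking towards the largest optimal price excludes all types but the top one.\<close>
definition equal_revenue_value :: "real \<Rightarrow> nat \<Rightarrow> real" where
  "equal_revenue_value q i = (1 / q) ^ (i - 1)"

definition equal_revenue_prob :: "nat \<Rightarrow> real \<Rightarrow> nat \<Rightarrow> real" where
  "equal_revenue_prob K q i = (if i < K then q ^ (i - 1) * (1 - q) else q ^ (K - 1))"

lemma survival_equal_revenue_prob:
  assumes "1 \<le> k" "k \<le> K"
  shows "survival K (equal_revenue_prob K q) k = q ^ (k - 1)"
  using assms(2)
proof (induction rule: inc_induct)
  case base
  then show ?case by (simp add: survival_def equal_revenue_prob_def)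
next
  case (step n)
  have "q ^ n = q ^ (n - 1) * q" using step.hyps assms(1) by (cases n) auto
  with step show ?case
    by (simp add: survival_Suc equal_revenue_prob_def algebra_simps)
qed

lemma rev_at_equal_revenue:
  assumes "0 < q" "k \<in> {1..K}"
  shows "rev_at K (equal_revenue_value q) (equal_revenue_prob K q) k = 1"
  using assms
  by (simp add: rev_at_survival survival_equal_revenue_prob equal_revenue_value_def
      power_mult_distrib[symmetric])

lemma t_idx_equal_revenue:
  assumes "0 < q" "1 \<le> K"
  shows "t_idx K (equal_revenue_value q) (equal_revenue_prob K q) = K"
  using assms unfolding t_idx_def by (simp add: rev_at_equal_revenue cong: conj_cong) (intro Max_eqI; auto)

lemma admissible_equal_revenue:
  assumes "0 < q" "q < 1" "1 \<le> K" "(1 / q) ^ (K - 1) \<le> r"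
  shows "admissible r K (equal_revenue_value q) (equal_revenue_prob K q)"
  unfolding admissible_def
proof (intro conjI ballI impI)
  fix i j :: nat assume "i \<in> {1..K}" "j \<in> {1..K}" "i < j"
  then show "equal_revenue_value q i < equal_revenue_value q j"
    unfolding equal_revenue_value_def using assms by (intro power_strict_increasing) auto
next
  fix i assume "i \<in> {1..K}"
  then show "0 < equal_revenue_prob K q i"
    unfolding equal_revenue_prob_def using assms by auto
next
  show "(\<Sum>i=1..K. equal_revenue_prob K q i) = 1"
    using survival_equal_revenue_prob[of 1 K q] assms by (simp add: survival_def)
qed (use assms in \<open>auto simp: equal_revenue_value_def\<close>)

lemma ELR1_equal_revenue:
  assumes "0 < q" "1 \<le> K"
  shows "ELR1 K (equal_revenue_value q) (equal_revenue_prob K q)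
    = (real K - 1) * (1 - q) / (1 + (real K - 1) * (1 - q))"
proof -
  let ?w = "\<lambda>i. equal_revenue_prob K q i * equal_revenue_value q i"
  have "(\<Sum>i=1..K - 1. ?w i) = (\<Sum>i=1..K - 1. 1 - q)"
    using assms by (intro sum.cong) (auto simp: equal_revenue_prob_def equal_revenue_value_def
        power_mult_distrib[symmetric])
  also have "\<dots> = (real K - 1) * (1 - q)"
    using assms by (simp add: of_nat_diff)
  finally have lost: "(\<Sum>i=1..K - 1. ?w i) = (real K - 1) * (1 - q)" .
  have top: "?w K = 1"
    using assms by (simp add: equal_revenue_prob_def equal_revenue_value_def
        power_mult_distrib[symmetric])
  have "{1..K} = insert K {1..K - 1}" using assms by auto
  then have "(\<Sum>i=1..K. ?w i) = 1 + (real K - 1) * (1 - q)"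
    using assms lost top by simp
  then show ?thesis
    using assms lost by (simp add: ELR1_def t_idx_equal_revenue)
qed

lemma powr_inverse_root:
  assumes "2 \<le> K" "1 < r"
  defines "q \<equiv> r powr (-1 / (real K - 1))"
  shows "0 < q" "q < 1" "(1 / q) ^ (K - 1) = r"
proof -
  show "0 < q" "q < 1"
    unfolding q_def using assms by (auto intro: powr_less_one)
  have "(1 / q) ^ (K - 1) = r powr (1 / (real K - 1) * real (K - 1))"
    using assms by (simp add: q_def powr_realpow[symmetric] powr_minus_divide powr_powr)
  also have "\<dots> = r" using assms by (simp add: of_nat_diff)
  finally show "(1 / q) ^ (K - 1) = r" .
qed

lemma admissible_exists:
  assumes "2 \<le> K" "1 < r"
  shows "\<exists>x p. admissible r K x p"
proof -
  define q where "q = r powr (-1 / (real K - 1))"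
  have "admissible r K (equal_revenue_value q) (equal_revenue_prob K q)"
    using powr_inverse_root[OF assms] assms unfolding q_def[symmetric]
    by (intro admissible_equal_revenue) auto
  then show ?thesis by blast
qed

lemma eta_ge_equal_revenue:
  assumes "2 \<le> K" "1 < r"
  shows "(real K - 1) * (1 - r powr (-1 / (real K - 1)))
      / (1 + (real K - 1) * (1 - r powr (-1 / (real K - 1)))) \<le> eta r K"
proof -
  define q where "q = r powr (-1 / (real K - 1))"
  have q: "0 < q" "q < 1" "(1 / q) ^ (K - 1) = r" and "1 \<le> K"
    using powr_inverse_root[OF assms] assms unfolding q_def by auto
  then have "ELR1 K (equal_revenue_value q) (equal_revenue_prob K q) \<le> eta r K"
    by (intro ELR1_le_eta admissible_equal_revenue) auto
  with q \<open>1 \<le> K\<close> show ?thesis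
    unfolding q_def[symmetric] by (simp add: ELR1_equal_revenue)
qed

lemma eta_le_ln:
  assumes "2 \<le> K" "1 < r"
  shows "eta r K \<le> ln r / (1 + ln r)"
  using admissible_exists[OF assms] ELR1_le_ln assms by (intro eta_le) auto

lemma eta_le_linear:
  assumes "2 \<le> K" "1 < r"
  shows "eta r K \<le> (real K - 1) * (1 - 1 / r) / (1 + (real K - 1) * (1 - 1 / r))"
  using admissible_exists[OF assms] ELR1_le_linear assms by (intro eta_le) auto

lemma eta_less:
  assumes "2 \<le> K" "1 < r"
  shows "eta r K < 1 - 1 / real K"
proof -
  have "eta r K \<le> (real K - 1) * (1 - 1 / r) / (1 + (real K - 1) * (1 - 1 / r))"
    using eta_le_linear[OF assms] .
  also have "\<dots> < (real K - 1) / (1 + (real K - 1))"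
  proof (rule divide_one_plus_strict_mono)
    show "0 \<le> (real K - 1) * (1 - 1 / r)" using assms by simp
    have "0 < (real K - 1) / r" using assms by simp
    then show "(real K - 1) * (1 - 1 / r) < real K - 1" by (simp add: right_diff_distrib)
  qed
  also have "\<dots> = 1 - 1 / real K"
    using assms by (simp add: diff_divide_distrib)
  finally show ?thesis .
qed

lemma tendsto_eta_at_top:
  assumes "2 \<le> K"
  shows "((\<lambda>r. eta r K) \<longlongrightarrow> 1 - 1 / real K) at_top"
proof -
  have "1 < real K" using assms by simp
  have "1 - 1 / real K = (real K - 1) / (1 + (real K - 1))"
    using assms by (simp add: diff_divide_distrib)
  moreover have "((\<lambda>r. eta r K) \<longlongrightarrow> (real K - 1) / (1 + (real K - 1))) at_top"
  proof (rule tendsto_sandwich)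
    have "((\<lambda>r. (real K - 1) * (1 - r powr (-1 / (real K - 1)))) \<longlongrightarrow> real K - 1) at_top"
      using \<open>1 < real K\<close> by real_asymp
    then show "((\<lambda>r. (real K - 1) * (1 - r powr (-1 / (real K - 1)))
        / (1 + (real K - 1) * (1 - r powr (-1 / (real K - 1)))))
        \<longlongrightarrow> (real K - 1) / (1 + (real K - 1))) at_top"
      using \<open>1 < real K\<close> by (intro tendsto_divide_one_plus) auto
    have "((\<lambda>r. (real K - 1) * (1 - 1 / r)) \<longlongrightarrow> real K - 1) at_top"
      by real_asymp
    then show "((\<lambda>r. (real K - 1) * (1 - 1 / r) / (1 + (real K - 1) * (1 - 1 / r)))
        \<longlongrightarrow> (real K - 1) / (1 + (real K - 1))) at_top"
      using \<open>1 < real K\<close> by (intro tendsto_divide_one_plus) auto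
    show "\<forall>\<^sub>F r in at_top. (real K - 1) * (1 - r powr (-1 / (real K - 1)))
        / (1 + (real K - 1) * (1 - r powr (-1 / (real K - 1)))) \<le> eta r K"
      using eventually_gt_at_top[of 1] by eventually_elim (rule eta_ge_equal_revenue[OF assms])
    show "\<forall>\<^sub>F r in at_top. eta r K \<le> (real K - 1) * (1 - 1 / r) / (1 + (real K - 1) * (1 - 1 / r))"
      using eventually_gt_at_top[of 1] by eventually_elim (rule eta_le_linear[OF assms])
  qed
  ultimately show ?thesis by simp
qed

lemma tendsto_eta_sequentially:
  assumes "1 < r"
  shows "(\<lambda>K. eta r K) \<longlonglongrightarrow> ln r / (1 + ln r)"
proof (rule tendsto_sandwich)
  have "(\<lambda>K. (real K - 1) * (1 - r powr (-1 / (real K - 1)))) \<longlonglongrightarrow> ln r"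
    using assms by real_asymp
  then show "(\<lambda>K. (real K - 1) * (1 - r powr (-1 / (real K - 1)))
      / (1 + (real K - 1) * (1 - r powr (-1 / (real K - 1))))) \<longlonglongrightarrow> ln r / (1 + ln r)"
    using assms by (intro tendsto_divide_one_plus) auto
  show "\<forall>\<^sub>F K in sequentially. (real K - 1) * (1 - r powr (-1 / (real K - 1)))
      / (1 + (real K - 1) * (1 - r powr (-1 / (real K - 1)))) \<le> eta r K"
    using eventually_ge_at_top[of 2] by eventually_elim (rule eta_ge_equal_revenue[OF _ assms])
  show "\<forall>\<^sub>F K in sequentially. eta r K \<le> ln r / (1 + ln r)"
    using eventually_ge_at_top[of 2] by eventually_elim (rule eta_le_ln[OF _ assms])
qed simp

theorem corollary2:
  shows "(\<forall>K::nat. K \<ge> 2 \<longrightarrow>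
            (\<forall>r::real. r > 1 \<longrightarrow> eta r K < 1 - 1 / real K) \<and>
            ((\<lambda>r. eta r K) \<longlongrightarrow> 1 - 1 / real K) at_top) \<and>
         (\<forall>r::real. r > 1 \<longrightarrow>
            (\<forall>K::nat. K \<ge> 2 \<longrightarrow> eta r K \<le> ln r / (1 + ln r)) \<and>
            ((\<lambda>K. eta r K) \<longlonglongrightarrow> ln r / (1 + ln r)))"
  using eta_less tendsto_eta_at_top eta_le_ln tendsto_eta_sequentially by blast

end
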